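(* Let $\mathfrak{A}$ be an abstract calculus with upward space $\mathrm{Up}(\mathfrak{A})=(\mathbf{S},\eqslantless)$. Then $\eqslantless$ is a connected partial order on $\mathbf S$. Moreover, taking $\mathfrak{B}\wedge\mathfrak{C}=\inf\{\mathfrak{B},\mathfrak{C}\}$ and $\mathfrak{B}\vee\mathfrak{C}=\sup\{\mathfrak{B},\mathfrak{C}\}$ with respect to $\eqslantless$, $(\mathbf{S},\wedge,\vee)$ is a complete lattice whose bottom element is $\mathfrak{A}$.
   Context: Fix a non-empty finite set $\mathtt{E}$ of edge types and a countably infinite set $\mathtt S$ of sequents (atomic labels). G-sequents are finite graphs with vertex set $\mathcal V$, edge relations $\mathcal E_a\subseteq\mathcal V\times\mathcal V$ for $a\in\mathtt E$, and vertex labels in $\mathtt S$; written $\Gamma\vdash\Delta$ with $\Gamma$ the set of edge atoms $w\mathcal E_a u$ and $\Delta$ the set of prefixed sequents $w:S$. Let $\overline{\mathtt E}=\{\bar a\mid a\in\mathtt E\}$, $\bar{\bar z}=z$, $\overline{x_1\cdots x_n}=\bar x_n\cdots\bar x_1$. An $\mathtt E$-system is a finite set $\mathbf G$ of production rules $x\longrightarrow t$ ($x\in\mathtt E\cup\overline{\mathtt E}$, $t$ a string over $\mathtt E\cup\overline{\mathtt E}$) with $x\longrightarrow t\in\mathbf G$ iff $\bar x\longrightarrow\bar t\in\mathbf G$; $\mathbf G(a)=\{t\mid a\longrightarrow^*_{\mathbf G}t\}$. Rules of an abstract calculus are of the kinds: initial rules $i(C,R)$ and reachability rules $r(\mathcal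 C,R)$, whose applicability is governed by constraints $C$ (resp. constraint families $\mathcal C$), i.e. trees whose edges are labelled by languages $\mathbf G'(a)$ ($a\in\mathtt E$, $\mathbf G'$ an $\mathtt E$-system) requiring $\mathbf G'(a)$-labelled paths in the g-sequent, and by sequent constraints $R$; local rules and expansion rules (no constraints); and Horn rules: for $a\in\mathtt E$ and a string $s=x_1\cdots x_n$, the forward Horn rule with premise $\Gamma,w\mathcal E_s u,w\mathcal E_a u\vdash\Delta$ and conclusion $\Gamma,w\mathcal E_s u\vdash\Delta$, and the backward Horn rule with $u\mathcal E_a w$ in place of $w\mathcal E_a u$ (here $w\mathcal E_s u$ abbreviates a chain $w\mathcal E_{x_1}v_1,\dots,v_{n-1}\mathcal E_{x_n}u$, $v\mathcal E_{\bar a}z$ meaning $z\mathcal E_a v$, $w\mathcal E_\varepsilon u$ meaning $w=u$). $\mathbf G(h_f)=\{a\longrightarrow s,\bar a\longrightarrow\bar s\}$, $\mathbf G(h_b)=\{\bar a\longrightarrow s,a\longrightarrow\bar s\}$; $\mathbf G(\mathrm H)$ is the union over a set $\mathrm H$ of Horn rules. Absorb: $C\oplus\mathbf G$ replaces every edge label $\mathbf G'(a)$ by $(\mathbf G'\cup\mathbf G)(a)$ (componentwise on families); $i(C,R)\oplus\mathbf G=i(C\oplus\mathbf G,R)$, $r(\mathcal C,R)\oplus\mathbf G=r(\mathcal C\oplus\mathbf G,R)$. An abstract calculus is $\mathfrak A=(\mathcal G^{\mathtt E},\mathfrak R)$ with $\mathcal G^{\mathtt E}$ the set of g-sequents over $\mathtt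 E$ and $\mathfrak R$ a finite set of such rules; $\mathrm H(\mathfrak A)$ is its set of Horn rules; $\mathfrak A\setminus\mathrm R$ removes rules; $\mathfrak A\oplus\mathbf G$ replaces each initial and reachability rule $\rho$ by $\rho\oplus\mathbf G$. Dependency graph of Horn rules: for a production rule $p=x\longrightarrow t$ let $\bar p=\bar x\longrightarrow\bar t$; each Horn rule $h$ has a production pair $(p,\bar p)$ formed by its grammar. For distinct pairs with $p=x\longrightarrow s$, $p'=y\longrightarrow t$, $(p,\bar p)\sqsubset(p',\bar p')$ iff $s$ or $\bar s$ contains $y$; $\sqsubseteq$ is its reflexive-transitive closure; $\mathsf{DG}(\mathrm H)=(\mathrm H,\sqsubseteq')$ where $h\sqsubseteq'h'$ iff the pair of $h$ is $\sqsubseteq$ the pair of $h'$. $V'$ is fracturable in $(V,\sqsubseteq)$ iff there are no $v\in V'$, $v'\in V\setminus V'$ with $v\sqsubseteq v'$; $V''$ is anti-fracturable iff $V''=V\setminus V'$ for a fracturable $V'$. Upward space $\mathrm{Up}(\mathfrak A)=(\mathbf S,\eqslantless)$, defined inductively: $\mathfrak A\in\mathbf S$; if $\mathfrak B\in\mathbf S$ and $\mathrm H'\subseteq\mathrm H(\mathfrak B)$ is anti-fracturable in $\mathsf{DG}(\mathrm H(\mathfrak B))$, then $\mathfrak C=(\mathfrak B\oplus\mathbf G(\mathrm H'))\setminus\mathrm H'\in\mathbf S$ and $\mathfrak B\eqslantless\mathfrak C$. *)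

theory Defs
  imports Main
begin

text \<open>The edge types E are the elements of a (nonempty) finite type 'e.
  A symbol is an element of E or of the set of inverses (bar E).\<close>

datatype 'e sym = Pos 'e | Neg 'e

fun bar :: "'e sym \<Rightarrow> 'e sym" where
  "bar (Pos a) = Neg a"
| "bar (Neg a) = Pos a"

definition bar_str :: "'e sym list \<Rightarrow> 'e sym list" where
  "bar_str xs = rev (map bar xs)"

type_synonym 'e prod = "'e sym \<times> 'e sym list"

definition bar_prod :: "'e prod \<Rightarrow> 'e prod" where
  "bar_prod p = (bar (fst p), bar_str (snd p))"

definition E_system :: "'e prod set \<Rightarrow> bool" where
  "E_system G \<longleftrightarrow> finite G \<and> (\<forall>x t. (x, t) \<in> G \<longleftrightarrow> (bar x, bar_str t) \<in> G)"

inductive derives :: "'e prod set \<Rightarrow> 'e sym list \<Rightarrow> 'e sym list \<Rightarrow> bool" for G where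
  refl: "derives G u u"
| step: "derives G u (v @ [x] @ w) \<Longrightarrow> (x, t) \<in> G \<Longrightarrow> derives G u (v @ t @ w)"

definition lang :: "'e prod set \<Rightarrow> 'e \<Rightarrow> 'e sym list set" where
  "lang G a = {t. derives G [Pos a] t}"

text \<open>A constraint is a tree whose edges are labelled by languages G'(a),
  represented syntactically by the pair (G', a) (denoting lang G' a).\<close>

datatype 'e ctree = CNode "(('e prod set \<times> 'e) \<times> 'e ctree) list"

fun ct_labels :: "'e ctree \<Rightarrow> ('e prod set \<times> 'e) set" where
  "ct_labels (CNode es) = (\<Union>e \<in> set es. {fst e} \<union> ct_labels (snd e))"

fun ct_absorb :: "'e ctree \<Rightarrow> 'e prod set \<Rightarrow> 'e ctree" where
  "ct_absorb (CNode es) G =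
     CNode (map (\<lambda>e. ((fst (fst e) \<union> G, snd (fst e)), ct_absorb (snd e) G)) es)"

text \<open>Rules of an abstract calculus. 'r: sequent constraints; 'l: data of local
  and expansion rules (these carry no constraints).\<close>

datatype ('e, 'r, 'l) rule =
    Init "'e ctree" 'r
  | Reach "'e ctree list" 'r
  | Local 'l
  | Expan 'l
  | HornF 'e "'e sym list"
  | HornB 'e "'e sym list"

fun is_horn :: "('e, 'r, 'l) rule \<Rightarrow> bool" where
  "is_horn (HornF a s) = True"
| "is_horn (HornB a s) = True"
| "is_horn _ = False"

fun rule_absorb :: "('e, 'r, 'l) rule \<Rightarrow> 'e prod set \<Rightarrow> ('e, 'r, 'l) rule" where
  "rule_absorb (Init C R) G = Init (ct_absorb C G) R"
| "rule_absorb (Reach Cs R) G = Reach (map (\<lambda>C. ct_absorb C G) Cs) R"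
| "rule_absorb \<rho> G = \<rho>"

fun rule_grammars :: "('e, 'r, 'l) rule \<Rightarrow> 'e prod set set" where
  "rule_grammars (Init C R) = fst ` ct_labels C"
| "rule_grammars (Reach Cs R) = (\<Union>C \<in> set Cs. fst ` ct_labels C)"
| "rule_grammars _ = {}"

text \<open>An abstract calculus (over the fixed set of g-sequents over E) is given by
  a finite set of rules; all grammars labelling constraints are E-systems.\<close>

type_synonym ('e, 'r, 'l) calculus = "('e, 'r, 'l) rule set"

definition abstract_calculus :: "('e, 'r, 'l) calculus \<Rightarrow> bool" where
  "abstract_calculus A \<longleftrightarrow> finite A \<and> (\<forall>\<rho> \<in> A. \<forall>G \<in> rule_grammars \<rho>. E_system G)"

definition horns :: "('e, 'r, 'l) calculus \<Rightarrow> ('e, 'r, 'l) rule set" where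
  "horns A = {h \<in> A. is_horn h}"

definition calc_absorb :: "('e, 'r, 'l) calculus \<Rightarrow> 'e prod set \<Rightarrow> ('e, 'r, 'l) calculus" where
  "calc_absorb A G = (\<lambda>\<rho>. rule_absorb \<rho> G) ` A"

fun horn_prod :: "('e, 'r, 'l) rule \<Rightarrow> 'e prod" where
  "horn_prod (HornF a s) = (Pos a, s)"
| "horn_prod (HornB a s) = (Neg a, s)"
| "horn_prod _ = undefined"

definition horn_pair :: "('e, 'r, 'l) rule \<Rightarrow> 'e prod set" where
  "horn_pair h = {horn_prod h, bar_prod (horn_prod h)}"

definition horn_grammar :: "('e, 'r, 'l) rule \<Rightarrow> 'e prod set" where
  "horn_grammar h = horn_pair h"

definition horns_grammar :: "('e, 'r, 'l) rule set \<Rightarrow> 'e prod set" where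
  "horns_grammar H = (\<Union>h \<in> H. horn_grammar h)"

definition pair_dep :: "('e, 'r, 'l) rule \<Rightarrow> ('e, 'r, 'l) rule \<Rightarrow> bool" where
  "pair_dep h h' \<longleftrightarrow> horn_pair h \<noteq> horn_pair h' \<and>
     (fst (horn_prod h') \<in> set (snd (horn_prod h)) \<or>
      fst (horn_prod h') \<in> set (bar_str (snd (horn_prod h))))"

definition pair_step :: "('e, 'r, 'l) rule set \<Rightarrow> ('e prod set \<times> 'e prod set) set" where
  "pair_step H = {(horn_pair h, horn_pair h') | h h'. h \<in> H \<and> h' \<in> H \<and> pair_dep h h'}"

definition DG_le :: "('e, 'r, 'l) rule set \<Rightarrow> ('e, 'r, 'l) rule \<Rightarrow> ('e, 'r, 'l) rule \<Rightarrow> bool" where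
  "DG_le H h h' \<longleftrightarrow> (horn_pair h, horn_pair h') \<in> (pair_step H)\<^sup>*"

definition fracturable :: "('e, 'r, 'l) rule set \<Rightarrow> ('e, 'r, 'l) rule set \<Rightarrow> bool" where
  "fracturable V V' \<longleftrightarrow> V' \<subseteq> V \<and> \<not> (\<exists>v \<in> V'. \<exists>v' \<in> V - V'. DG_le V v v')"

definition anti_fracturable :: "('e, 'r, 'l) rule set \<Rightarrow> ('e, 'r, 'l) rule set \<Rightarrow> bool" where
  "anti_fracturable V V'' \<longleftrightarrow> (\<exists>V'. fracturable V V' \<and> V'' = V - V')"

definition up_step :: "('e, 'r, 'l) calculus \<Rightarrow> ('e, 'r, 'l) rule set \<Rightarrow> ('e, 'r, 'l) calculus" where
  "up_step B H' = calc_absorb B (horns_grammar H') - H'"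

inductive_set upS :: "('e, 'r, 'l) calculus \<Rightarrow> ('e, 'r, 'l) calculus set" for A where
  base: "A \<in> upS A"
| step: "B \<in> upS A \<Longrightarrow> H' \<subseteq> horns B \<Longrightarrow> anti_fracturable (horns B) H'
          \<Longrightarrow> up_step B H' \<in> upS A"

text \<open>The relation \<eqslantless> of Up(A), as generated by the inductive clause.\<close>

definition upR :: "('e, 'r, 'l) calculus \<Rightarrow> (('e, 'r, 'l) calculus \<times> ('e, 'r, 'l) calculus) set" where
  "upR A = {(B, C). B \<in> upS A \<and> (\<exists>H'. H' \<subseteq> horns B \<and> anti_fracturable (horns B) H'
                                        \<and> C = up_step B H')}"

definition connected_on :: "'a set \<Rightarrow> ('a \<times> 'a) set \<Rightarrow> bool" where
  "connected_on S r \<longleftrightarrow> (\<forall>x \<in> S. \<forall>y \<in> S. (x, y) \<in> (r \<union> r\<inverse>)\<^sup>*)"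

definition is_lub_on :: "'a set \<Rightarrow> ('a \<times> 'a) set \<Rightarrow> 'a set \<Rightarrow> 'a \<Rightarrow> bool" where
  "is_lub_on S r X u \<longleftrightarrow> u \<in> S \<and> (\<forall>x \<in> X. (x, u) \<in> r)
      \<and> (\<forall>v \<in> S. (\<forall>x \<in> X. (x, v) \<in> r) \<longrightarrow> (u, v) \<in> r)"

definition is_glb_on :: "'a set \<Rightarrow> ('a \<times> 'a) set \<Rightarrow> 'a set \<Rightarrow> 'a \<Rightarrow> bool" where
  "is_glb_on S r X l \<longleftrightarrow> l \<in> S \<and> (\<forall>x \<in> X. (l, x) \<in> r)
      \<and> (\<forall>v \<in> S. (\<forall>x \<in> X. (v, x) \<in> r) \<longrightarrow> (v, l) \<in> r)"

definition complete_lattice_on :: "'a set \<Rightarrow> ('a \<times> 'a) set \<Rightarrow> bool" where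
  "complete_lattice_on S r \<longleftrightarrow> partial_order_on S r \<and>
     (\<forall>X \<subseteq> S. (\<exists>u. is_lub_on S r X u) \<and> (\<exists>l. is_glb_on S r X l))"

end

theory Submission
  imports Defs
begin

text \<open>Absorbing grammars leaves Horn rules untouched, and two successive upward steps amount to
  a single one. Hence every member of \<open>Up(A)\<close> is obtained from \<open>A\<close> in one step and is
  determined by the Horn rules it keeps; these sets are exactly the fracturable subsets of
  \<open>H(A)\<close>, and the upward order is reverse inclusion between them. Fracturable sets are closed
  under arbitrary unions and intersections, so the order is a complete lattice with least element
  \<open>A\<close>, which also makes it connected.\<close>

lemma ct_absorb_empty [simp]: "ct_absorb C {} = C"
  by (induction C "{} :: 'a prod set" rule: ct_absorb.induct) (auto intro: map_idI)

lemma ct_absorb_absorb [simp]: "ct_absorb (ct_absorb C G1) G2 = ct_absorb C (G1 \<union> G2)"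
  by (induction C G1 rule: ct_absorb.induct) (auto simp: Un_assoc)

lemma rule_absorb_empty [simp]: "rule_absorb \<rho> {} = \<rho>"
  by (cases \<rho>) (auto intro: map_idI)

lemma rule_absorb_absorb [simp]:
  "rule_absorb (rule_absorb \<rho> G1) G2 = rule_absorb \<rho> (G1 \<union> G2)"
  by (cases \<rho>) auto

lemma is_horn_rule_absorb [simp]: "is_horn (rule_absorb \<rho> G) = is_horn \<rho>"
  by (cases \<rho>) auto

lemma rule_absorb_horn: "is_horn \<rho> \<Longrightarrow> rule_absorb \<rho> G = \<rho>"
  by (cases \<rho>) auto

lemma calc_absorb_empty [simp]: "calc_absorb B {} = B"
  by (simp add: calc_absorb_def)

lemma calc_absorb_absorb [simp]:
  "calc_absorb (calc_absorb B G1) G2 = calc_absorb B (G1 \<union> G2)"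
  by (auto simp: calc_absorb_def image_image)

lemma horns_calc_absorb [simp]: "horns (calc_absorb B G) = horns B"
  by (force simp: horns_def calc_absorb_def rule_absorb_horn)

lemma horns_Diff [simp]: "horns (B - H) = horns B - H"
  by (auto simp: horns_def)

lemma calc_absorb_Diff_horns:
  assumes "\<forall>h \<in> H. is_horn h"
  shows "calc_absorb (B - H) G = calc_absorb B G - H"
  using assms by (force simp: calc_absorb_def rule_absorb_horn)

lemma horns_grammar_Un: "horns_grammar (H1 \<union> H2) = horns_grammar H1 \<union> horns_grammar H2"
  by (auto simp: horns_grammar_def)

lemma horns_up_step [simp]: "horns (up_step B H) = horns B - H"
  by (simp add: up_step_def)

lemma up_step_up_step:
  assumes "\<forall>h \<in> H1. is_horn h"
  shows "up_step (up_step B H1) H2 = up_step B (H1 \<union> H2)"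
  unfolding up_step_def calc_absorb_Diff_horns[OF assms] by (auto simp: horns_grammar_Un)

definition keep_horns :: "('e, 'r, 'l) calculus \<Rightarrow> ('e, 'r, 'l) rule set \<Rightarrow> ('e, 'r, 'l) calculus" where
  "keep_horns A V = up_step A (horns A - V)"

lemma horns_keep_horns: "V \<subseteq> horns A \<Longrightarrow> horns (keep_horns A V) = V"
  by (auto simp: keep_horns_def)

lemma keep_horns_horns [simp]: "keep_horns A (horns A) = A"
  by (simp add: keep_horns_def up_step_def horns_grammar_def)

lemma up_step_keep_horns:
  assumes "V2 \<subseteq> V1" "V1 \<subseteq> horns A"
  shows "up_step (keep_horns A V1) (V1 - V2) = keep_horns A V2"
proof -
  have "\<forall>h \<in> horns A - V1. is_horn h" by (simp add: horns_def)
  moreover have "(horns A - V1) \<union> (V1 - V2) = horns A - V2" using assms by blast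
  ultimately show ?thesis by (simp add: keep_horns_def up_step_up_step)
qed

lemma pair_step_mono: "V \<subseteq> W \<Longrightarrow> pair_step V \<subseteq> pair_step W"
  unfolding pair_step_def by blast

lemma DG_le_mono: "V \<subseteq> W \<Longrightarrow> DG_le V v v' \<Longrightarrow> DG_le W v v'"
  unfolding DG_le_def by (meson pair_step_mono rtrancl_mono subsetD)

text \<open>A dependency path starting in a fracturable set stays inside it, so it is already a path
  in the dependency graph of that set.\<close>

lemma DG_le_fracturable:
  assumes fr: "fracturable W V" and v: "v \<in> V" and le: "DG_le W v v'"
  shows "DG_le V v v'"
proof -
  have "\<exists>w \<in> V. horn_pair w = Q \<and> (horn_pair v, Q) \<in> (pair_step V)\<^sup>*"
    if "(horn_pair v, Q) \<in> (pair_step W)\<^sup>*" for Q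
    using that
  proof (induction rule: rtrancl_induct)
    case base
    then show ?case using v by auto
  next
    case (step Q R)
    then obtain w where w: "w \<in> V" "horn_pair w = Q" "(horn_pair v, Q) \<in> (pair_step V)\<^sup>*"
      by auto
    from step.hyps(2) obtain h h' where
      hh: "h \<in> W" "h' \<in> W" "pair_dep h h'" "horn_pair h = Q" "horn_pair h' = R"
      unfolding pair_step_def by auto
    have "DG_le W w h" "DG_le W w h'"
      using w hh step.hyps(2) by (auto simp: DG_le_def)
    with fr w hh have "h \<in> V" "h' \<in> V" unfolding fracturable_def by blast+
    with hh have "(Q, R) \<in> pair_step V" unfolding pair_step_def by blast
    with w \<open>h' \<in> V\<close> hh(5) show ?case by (blast intro: rtrancl_into_rtrancl)
  qed
  with le show ?thesis by (auto simp: DG_le_def)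
qed

lemma fracturable_refl: "fracturable W W"
  by (simp add: fracturable_def)

lemma fracturable_trans:
  assumes "fracturable W V1" "fracturable V1 V2"
  shows "fracturable W V2"
  using assms DG_le_fracturable unfolding fracturable_def by blast

lemma fracturable_subset:
  assumes "fracturable W V2" "V2 \<subseteq> V1" "V1 \<subseteq> W"
  shows "fracturable V1 V2"
  using assms DG_le_mono unfolding fracturable_def by blast

lemma fracturable_Union: "(\<And>V. V \<in> \<V> \<Longrightarrow> fracturable W V) \<Longrightarrow> fracturable W (\<Union>\<V>)"
  unfolding fracturable_def by blast

lemma fracturable_Inter: "(\<And>V. V \<in> \<V> \<Longrightarrow> fracturable W V) \<Longrightarrow> fracturable W (W \<inter> \<Inter>\<V>)"
  unfolding fracturable_def by blast

lemma keep_horns_in_upS: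
  assumes "fracturable (horns A) V"
  shows "keep_horns A V \<in> upS A"
proof -
  have "up_step A (horns A - V) \<in> upS A"
    using assms by (intro upS.step upS.base) (auto simp: anti_fracturable_def)
  then show ?thesis by (simp add: keep_horns_def)
qed

lemma upS_keep_horns:
  assumes "B \<in> upS A"
  shows "fracturable (horns A) (horns B) \<and> keep_horns A (horns B) = B"
  using assms
proof (induction rule: upS.induct)
  case base
  then show ?case by (simp add: fracturable_refl)
next
  case (step B H')
  then obtain V where V: "fracturable (horns B) V" "H' = horns B - V"
    by (auto simp: anti_fracturable_def)
  have "V \<subseteq> horns B" "horns B \<subseteq> horns A"
    using V(1) step.IH by (auto simp: fracturable_def)
  then have "up_step B H' = keep_horns A V"
    using step.IH V(2) up_step_keep_horns by metis
  then show ?case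
    using V step.IH \<open>V \<subseteq> horns B\<close> \<open>horns B \<subseteq> horns A\<close>
    by (auto simp: horns_keep_horns intro: fracturable_trans)
qed

lemma inj_on_horns_upS: "inj_on horns (upS A)"
  by (metis inj_onI upS_keep_horns)

lemma upR_subset: "upR A \<subseteq> upS A \<times> upS A"
  unfolding upR_def using upS.step by blast

lemma upR_iff:
  assumes "B \<in> upS A" "C \<in> upS A"
  shows "(B, C) \<in> upR A \<longleftrightarrow> horns C \<subseteq> horns B"
proof
  assume "(B, C) \<in> upR A"
  then show "horns C \<subseteq> horns B" by (auto simp: upR_def)
next
  assume le: "horns C \<subseteq> horns B"
  have frB: "fracturable (horns A) (horns B)" and B: "keep_horns A (horns B) = B"
    using upS_keep_horns[OF assms(1)] by auto
  have frC: "fracturable (horns A) (horns C)" and C: "keep_horns A (horns C) = C"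
    using upS_keep_horns[OF assms(2)] by auto
  have subB: "horns B \<subseteq> horns A" using frB by (simp add: fracturable_def)
  have "anti_fracturable (horns B) (horns B - horns C)"
    using fracturable_subset[OF frC le subB] le
    by (auto simp: anti_fracturable_def double_diff)
  moreover have "up_step B (horns B - horns C) = C"
    using up_step_keep_horns[OF le subB] B C by simp
  ultimately show "(B, C) \<in> upR A"
    using assms(1) by (auto simp: upR_def)
qed

lemma partial_order_on_antitone_image:
  assumes le: "\<And>x y. x \<in> S \<Longrightarrow> y \<in> S \<Longrightarrow> (x, y) \<in> r \<longleftrightarrow> f y \<subseteq> f x"
    and dom: "r \<subseteq> S \<times> S" and inj: "inj_on f S"
  shows "partial_order_on S r"
proof -
  have "refl_on S r" using le dom by (auto simp: refl_on_def)
  moreover have "trans r"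
  proof (rule transI)
    fix x y z assume xy: "(x, y) \<in> r" and yz: "(y, z) \<in> r"
    with dom have "x \<in> S" "y \<in> S" "z \<in> S" by auto
    with xy yz le show "(x, z) \<in> r" by (meson order_trans)
  qed
  moreover have "antisym r"
  proof (rule antisymI)
    fix x y assume xy: "(x, y) \<in> r" and yx: "(y, x) \<in> r"
    with dom have "x \<in> S" "y \<in> S" by auto
    with xy yx le have "f x = f y" by blast
    with inj \<open>x \<in> S\<close> \<open>y \<in> S\<close> show "x = y" by (simp add: inj_on_eq_iff)
  qed
  ultimately show ?thesis using dom by (simp add: partial_order_on_def preorder_on_def)
qed

lemma complete_lattice_on_antitone_image:
  assumes le: "\<And>x y. x \<in> S \<Longrightarrow> y \<in> S \<Longrightarrow> (x, y) \<in> r \<longleftrightarrow> f y \<subseteq> f x"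
    and dom: "r \<subseteq> S \<times> S" and inj: "inj_on f S"
    and bounded: "\<And>x. x \<in> S \<Longrightarrow> f x \<subseteq> W"
    and Inter: "\<And>X. X \<subseteq> S \<Longrightarrow> \<exists>u \<in> S. f u = W \<inter> \<Inter>(f ` X)"
    and Union: "\<And>X. X \<subseteq> S \<Longrightarrow> \<exists>l \<in> S. f l = \<Union>(f ` X)"
  shows "complete_lattice_on S r"
  unfolding complete_lattice_on_def
proof (intro conjI allI impI)
  show "partial_order_on S r" using partial_order_on_antitone_image[OF le dom inj] .
  fix X assume X: "X \<subseteq> S"
  obtain u where u: "u \<in> S" "f u = W \<inter> \<Inter>(f ` X)" using Inter[OF X] by blast
  have "is_lub_on S r X u"
    unfolding is_lub_on_def
  proof (intro conjI ballI impI u(1))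
    fix x assume "x \<in> X"
    with X u show "(x, u) \<in> r" by (subst le) auto
  next
    fix v assume v: "v \<in> S" and above: "\<forall>x \<in> X. (x, v) \<in> r"
    have "f v \<subseteq> f x" if "x \<in> X" for x
      using above that X v le by blast
    with v u show "(u, v) \<in> r" by (subst le) (auto dest: bounded)
  qed
  then show "\<exists>u. is_lub_on S r X u" ..
  obtain l where l: "l \<in> S" "f l = \<Union>(f ` X)" using Union[OF X] by blast
  have "is_glb_on S r X l"
    unfolding is_glb_on_def
  proof (intro conjI ballI impI l(1))
    fix x assume "x \<in> X"
    with X l show "(l, x) \<in> r" by (subst le) auto
  next
    fix v assume v: "v \<in> S" and below: "\<forall>x \<in> X. (v, x) \<in> r"
    have "f x \<subseteq> f v" if "x \<in> X" for x
      using below that X v le by blast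
    with v l show "(v, l) \<in> r" by (subst le) auto
  qed
  then show "\<exists>l. is_glb_on S r X l" ..
qed

lemma connected_on_if_least:
  assumes "a \<in> S" "\<forall>x \<in> S. (a, x) \<in> r"
  shows "connected_on S r"
  unfolding connected_on_def
proof (intro ballI)
  fix x y assume "x \<in> S" "y \<in> S"
  then have "(x, a) \<in> (r \<union> r\<inverse>)\<^sup>*" "(a, y) \<in> (r \<union> r\<inverse>)\<^sup>*" using assms by blast+
  then show "(x, y) \<in> (r \<union> r\<inverse>)\<^sup>*" by (rule rtrancl_trans)
qed

theorem mainTheorem10:
  fixes A :: "('e::finite, 'r, 'l) calculus"
  assumes "abstract_calculus A"
  shows "partial_order_on (upS A) (upR A)
       \<and> connected_on (upS A) (upR A)
       \<and> complete_lattice_on (upS A) (upR A)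
       \<and> A \<in> upS A \<and> (\<forall>B \<in> upS A. (A, B) \<in> upR A)"
proof -
  have realised: "\<exists>B \<in> upS A. horns B = V" if "fracturable (horns A) V" for V
    using that keep_horns_in_upS horns_keep_horns unfolding fracturable_def by blast
  have fracturable_horns: "fracturable (horns A) (horns B)" if "B \<in> upS A" for B
    using that upS_keep_horns by blast
  have bounded: "horns B \<subseteq> horns A" if "B \<in> upS A" for B
    using fracturable_horns[OF that] by (simp add: fracturable_def)
  have lattice: "complete_lattice_on (upS A) (upR A)"
  proof (rule complete_lattice_on_antitone_image[OF upR_iff upR_subset inj_on_horns_upS bounded])
    show "\<exists>u \<in> upS A. horns u = horns A \<inter> \<Inter>(horns ` X)" if "X \<subseteq> upS A" for X
      using that by (intro realised fracturable_Inter) (auto intro: fracturable_horns)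
    show "\<exists>l \<in> upS A. horns l = \<Union>(horns ` X)" if "X \<subseteq> upS A" for X
      using that by (intro realised fracturable_Union) (auto intro: fracturable_horns)
  qed
  have least: "(A, B) \<in> upR A" if "B \<in> upS A" for B
    using upR_iff[OF upS.base that] bounded[OF that] by simp
  show ?thesis
  proof (intro conjI ballI least lattice upS.base)
    show "partial_order_on (upS A) (upR A)"
      using lattice by (simp add: complete_lattice_on_def)
    show "connected_on (upS A) (upR A)"
      using least by (intro connected_on_if_least[OF upS.base]) blast
  qed
qed

end
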